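(* Let $P_{2n+1}$ ($n\ge 1$) be a weighted path with vertices $v_1,\dots,v_{2n+1}$ and edges $v_iv_{i+1}$, $1\le i\le 2n$. Then: (i) $P_{2n+1}$ is a spanning subtree of $P_{2n+1}^{\#}$ (i.e. each $v_iv_{i+1}$ is an edge of $P_{2n+1}^{\#}$); (ii) $v_iv_j$ is an edge of $P_{2n+1}^{\#}$ if and only if $i+j$ is odd; (iii) for $n\ge 2$, $P_{2n+1}^{\#}$ has no pendant vertices.
   Context: A weighted graph has a nonzero real weight on each edge; its adjacency matrix $A$ has $(i,j)$ entry equal to the weight of edge $v_iv_j$, or $0$ if no edge. $A^{\#}$ is the group inverse of $A$ (unique $X$ with $AXA=A$, $XAX=X$, $AX=XA$); the group inverse graph $G^{\#}$ is the weighted graph on the same vertex set with $v_iv_j$ an edge iff $(A^{\#})_{ij}\neq 0$, weighted by that entry. A subgraph relation between weighted graphs refers to their underlying graphs. A pendant vertex is a vertex of degree one. *)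

theory Defs
  imports "Jordan_Normal_Form.Matrix"
begin

text \<open>Vertices v_1..v_N are indexed 0..N-1. The weighted path on N vertices has
  edge (i, i+1) with weight w i, for i < N - 1.\<close>
definition path_adj :: "nat \<Rightarrow> (nat \<Rightarrow> real) \<Rightarrow> real mat" where
  "path_adj N w = mat N N (\<lambda>(i, j). if j = i + 1 then w i else if i = j + 1 then w j else 0)"

definition is_group_inverse :: "'a::semiring_1 mat \<Rightarrow> 'a mat \<Rightarrow> bool" where
  "is_group_inverse A X \<longleftrightarrow> X \<in> carrier_mat (dim_row A) (dim_col A) \<and>
     A * X * A = A \<and> X * A * X = X \<and> A * X = X * A"

definition group_inverse :: "'a::semiring_1 mat \<Rightarrow> 'a mat" where
  "group_inverse A = (THE X. is_group_inverse A X)"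

definition mat_edge :: "'a::zero mat \<Rightarrow> nat \<Rightarrow> nat \<Rightarrow> bool" where
  "mat_edge M i j \<longleftrightarrow> i < dim_row M \<and> j < dim_row M \<and> i \<noteq> j \<and> M $$ (i, j) \<noteq> 0"

definition mat_degree :: "'a::zero mat \<Rightarrow> nat \<Rightarrow> nat" where
  "mat_degree M i = card {j. mat_edge M i j}"

end

theory Submission
  imports Defs
begin

(* Index the vertices 0..2n. The kernel of the path adjacency matrix A is spanned by a vector z
  supported on the even vertices, with z_(2k+2) = -(w_(2k) / w_(2k+1)) z_(2k), and a matrix X is the
  group inverse of A as soon as A X = X A = I - z z^T / |z|^2 and z^T X = 0. This system has an
  explicit solution: X vanishes between vertices of equal parity and, for an odd vertex 2l+1 and an
  even vertex 2k,
    X_(2l+1, 2k) = z_(2k) ([k <= l] - s_l / |z|^2) / (w_(2l) z_(2l)),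
  where s_l = z_0^2 + z_2^2 + ... + z_(2l)^2. Since 0 < s_l < |z|^2 for l < n, all these entries are
  nonzero, so v_i v_j is an edge of the inverse graph iff i + j is odd; for n >= 2 every vertex then
  has two neighbours of the opposite parity. *)

lemma is_group_inverse_unique:
  fixes A :: "'a::semiring_1 mat"
  assumes A: "A \<in> carrier_mat N N"
    and X: "is_group_inverse A X" and Y: "is_group_inverse A Y"
  shows "X = Y"
proof -
  have XN: "X \<in> carrier_mat N N" and YN: "Y \<in> carrier_mat N N"
    using A X Y by (auto simp: is_group_inverse_def)
  have AXA: "A * X * A = A" and XAX: "X * A * X = X" and AX: "A * X = X * A"
    using X by (auto simp: is_group_inverse_def)
  have AYA: "A * Y * A = A" and YAY: "Y * A * Y = Y" and AY: "A * Y = Y * A"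
    using Y by (auto simp: is_group_inverse_def)
  have AX_N: "A * X \<in> carrier_mat N N" and AY_N: "A * Y \<in> carrier_mat N N"
    using A XN YN by auto
  have AAX: "A * (A * X) = A"
    using A XN AX AXA by (metis assoc_mult_mat)
  have "A * X = (A * Y) * A * X" using AYA by simp
  also have "\<dots> = (Y * A) * (A * X)" using assoc_mult_mat[OF AY_N A XN] AY by simp
  also have "\<dots> = Y * A" using assoc_mult_mat[OF YN A AX_N] AAX by simp
  finally have AX_YA: "A * X = Y * A" .
  have "X = X * (A * Y)" using XAX assoc_mult_mat[OF XN A XN] AX_YA AY by simp
  also have "\<dots> = (Y * A) * Y" using assoc_mult_mat[OF XN A YN] AX AX_YA by simp
  also have "\<dots> = Y" by (rule YAY)
  finally show ?thesis .
qed

lemma group_inverse_eqI: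
  fixes A :: "'a::semiring_1 mat"
  assumes "A \<in> carrier_mat N N" and "is_group_inverse A X"
  shows "group_inverse A = X"
  unfolding group_inverse_def using assms by (blast intro: is_group_inverse_unique)

lemma is_group_inverseI:
  fixes A :: "'a::semiring_1 mat"
  assumes "A \<in> carrier_mat N N" and "X \<in> carrier_mat N N" and "P \<in> carrier_mat N N"
    and "A * X = P" "X * A = P" "P * A = A" "P * X = X"
  shows "is_group_inverse A X"
  unfolding is_group_inverse_def using assms by auto

definition perp_proj_mat :: "nat \<Rightarrow> (nat \<Rightarrow> 'a::field) \<Rightarrow> 'a mat" where
  "perp_proj_mat N z = mat N N (\<lambda>(i, j). (if i = j then 1 else 0) - z i * z j / (\<Sum>m<N. z m ^ 2))"

lemma transpose_perp_proj_mat: "transpose_mat (perp_proj_mat N z) = perp_proj_mat N z"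
  by (rule eq_matI) (auto simp: perp_proj_mat_def mult.commute)

lemma perp_proj_mat_mult:
  fixes z :: "nat \<Rightarrow> 'a::field"
  assumes M: "M \<in> carrier_mat N K" and orth: "\<And>j. j < K \<Longrightarrow> (\<Sum>m<N. z m * M $$ (m, j)) = 0"
  shows "perp_proj_mat N z * M = M"
proof (rule eq_matI)
  fix i j assume "i < dim_row M" "j < dim_col M"
  then have i: "i < N" and j: "j < K" using M by auto
  let ?s = "\<Sum>m<N. z m ^ 2"
  have "(perp_proj_mat N z * M) $$ (i, j)
      = (\<Sum>m<N. (if i = m then M $$ (m, j) else 0) - z i / ?s * (z m * M $$ (m, j)))"
    using i j M by (auto simp: perp_proj_mat_def scalar_prod_def atLeast0LessThan algebra_simps
        intro!: sum.cong)
  also have "\<dots> = M $$ (i, j) - z i / ?s * (\<Sum>m<N. z m * M $$ (m, j))"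
    using i by (simp add: sum_subtractf sum_distrib_left)
  finally show "(perp_proj_mat N z * M) $$ (i, j) = M $$ (i, j)" using orth[OF j] by simp
qed (use M in \<open>auto simp: perp_proj_mat_def\<close>)

lemma path_adj_row_sum:
  assumes "i < N"
  shows "(\<Sum>m<N. path_adj N w $$ (i, m) * f m)
    = (if i + 1 < N then w i * f (i + 1) else 0) + (if 0 < i then w (i - 1) * f (i - 1) else 0)"
proof -
  have "(\<Sum>m<N. path_adj N w $$ (i, m) * f m)
     = (\<Sum>m<N. (if m = i + 1 then w i * f m else 0) + (if 0 < i \<and> m = i - 1 then w m * f m else 0))"
    using assms by (intro sum.cong) (auto simp: path_adj_def)
  also have "\<dots> = (if i + 1 < N then w i * f (i + 1) else 0) + (if 0 < i then w (i - 1) * f (i - 1) else 0)"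
    using assms by (simp add: sum.distrib del: sum.lessThan_Suc)
  finally show ?thesis .
qed

lemma index_mult_path_adj:
  assumes "M \<in> carrier_mat N K" and "i < N" and "j < K"
  shows "(path_adj N w * M) $$ (i, j)
    = (if i + 1 < N then w i * M $$ (i + 1, j) else 0) + (if 0 < i then w (i - 1) * M $$ (i - 1, j) else 0)"
  using assms path_adj_row_sum[of i N w "\<lambda>m. M $$ (m, j)"]
  by (simp add: path_adj_def scalar_prod_def atLeast0LessThan)

lemma transpose_path_adj: "transpose_mat (path_adj N w) = path_adj N w"
  by (rule eq_matI) (auto simp: path_adj_def)

primrec path_kernel_coeff :: "(nat \<Rightarrow> real) \<Rightarrow> nat \<Rightarrow> real" where
  "path_kernel_coeff w 0 = 1"
| "path_kernel_coeff w (Suc k) = - w (2 * k) / w (2 * k + 1) * path_kernel_coeff w k"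

declare path_kernel_coeff.simps(2) [simp del]

definition path_kernel_vec :: "(nat \<Rightarrow> real) \<Rightarrow> nat \<Rightarrow> real" where
  "path_kernel_vec w i = (if even i then path_kernel_coeff w (i div 2) else 0)"

definition path_kernel_psum :: "(nat \<Rightarrow> real) \<Rightarrow> nat \<Rightarrow> real" where
  "path_kernel_psum w l = (\<Sum>m<l. path_kernel_coeff w m ^ 2)"

lemma sum_path_kernel_vec:
  "(\<Sum>m<2 * n + 1. path_kernel_vec w m * g m) = (\<Sum>k\<le>n. path_kernel_coeff w k * g (2 * k))"
  by (induction n) (auto simp: path_kernel_vec_def)

lemma sum_path_kernel_vec_sq: "(\<Sum>m<2 * n + 1. path_kernel_vec w m ^ 2) = path_kernel_psum w (Suc n)"
  using sum_path_kernel_vec[where g = "path_kernel_vec w"]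
  by (simp add: power2_eq_square path_kernel_vec_def path_kernel_psum_def lessThan_Suc_atMost)

lemma path_kernel_psum_pos: "0 < l \<Longrightarrow> 0 < path_kernel_psum w l"
  unfolding path_kernel_psum_def
  by (rule sum_pos2[of _ 0]) auto

lemma path_kernel_psum_mono: "l \<le> l' \<Longrightarrow> path_kernel_psum w l \<le> path_kernel_psum w l'"
  unfolding path_kernel_psum_def by (rule sum_mono2) auto

context
  fixes n :: nat and w :: "nat \<Rightarrow> real"
  assumes weights_nonzero: "\<And>i. i < 2 * n \<Longrightarrow> w i \<noteq> 0"
begin

lemma path_kernel_coeff_nonzero: "k \<le> n \<Longrightarrow> path_kernel_coeff w k \<noteq> 0"
proof (induction k)
  case (Suc k)
  then show ?case
    using weights_nonzero[of "2 * k"] weights_nonzero[of "2 * k + 1"]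
    by (simp add: path_kernel_coeff.simps(2))
qed simp

lemma path_kernel_coeff_Suc:
  "k < n \<Longrightarrow> w (2 * k + 1) * path_kernel_coeff w (Suc k) = - w (2 * k) * path_kernel_coeff w k"
  using weights_nonzero[of "2 * k + 1"] by (simp add: path_kernel_coeff.simps(2))

lemma path_kernel_psum_less: "l \<le> n \<Longrightarrow> path_kernel_psum w l < path_kernel_psum w (Suc n)"
proof -
  assume "l \<le> n"
  then have "path_kernel_psum w l \<le> path_kernel_psum w n" by (rule path_kernel_psum_mono)
  moreover have "0 < path_kernel_coeff w n ^ 2" using path_kernel_coeff_nonzero[of n] by simp
  moreover have "path_kernel_psum w (Suc n) = path_kernel_psum w n + path_kernel_coeff w n ^ 2"
    by (simp add: path_kernel_psum_def)
  ultimately show ?thesis by linarith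
qed

(* k \<mapsto> centered_step l k is the indicator of {..<l} minus its mean with respect to the weights
  (path_kernel_coeff w k)^2; this centring makes the columns of the group inverse orthogonal to the
  kernel. *)
definition centered_step :: "nat \<Rightarrow> nat \<Rightarrow> real" where
  "centered_step l k = (if k < l then 1 else 0) - path_kernel_psum w l / path_kernel_psum w (Suc n)"

lemma centered_step_0: "centered_step 0 k = 0"
  by (simp add: centered_step_def path_kernel_psum_def)

lemma centered_step_last: "k \<le> n \<Longrightarrow> centered_step (Suc n) k = 0"
  using path_kernel_psum_pos[of "Suc n" w] by (simp add: centered_step_def)

lemma centered_step_Suc:
  "centered_step (Suc l) k - centered_step l k
    = (if k = l then 1 else 0) - path_kernel_coeff w l ^ 2 / path_kernel_psum w (Suc n)"
  by (auto simp: centered_step_def path_kernel_psum_def add_divide_distrib)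

lemma centered_step_diff_Suc: "centered_step l k - centered_step l (Suc k) = (if Suc k = l then 1 else 0)"
  by (simp add: centered_step_def)

lemma centered_step_nonzero: "0 < l \<Longrightarrow> l \<le> n \<Longrightarrow> centered_step l k \<noteq> 0"
  using path_kernel_psum_pos[of l w] path_kernel_psum_pos[of "Suc n" w] path_kernel_psum_less[of l]
  by (simp add: centered_step_def field_simps)

lemma weighted_sum_centered_step:
  assumes "l \<le> Suc n"
  shows "(\<Sum>k\<le>n. path_kernel_coeff w k ^ 2 * centered_step l k) = 0"
proof -
  let ?c = "path_kernel_coeff w" and ?S = "path_kernel_psum w (Suc n)"
  have "{..n} \<inter> {..<l} = {..<l}" using assms by auto
  then have indicator: "(\<Sum>k\<le>n. if k < l then ?c k ^ 2 else 0) = path_kernel_psum w l"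
    using sum.inter_restrict[of "{..n}" "\<lambda>k. ?c k ^ 2" "{..<l}"] by (simp add: path_kernel_psum_def)
  have "(\<Sum>k\<le>n. ?c k ^ 2 * centered_step l k)
      = (\<Sum>k\<le>n. (if k < l then ?c k ^ 2 else 0) - path_kernel_psum w l / ?S * ?c k ^ 2)"
    by (rule sum.cong) (auto simp: centered_step_def algebra_simps)
  also have "\<dots> = path_kernel_psum w l - path_kernel_psum w l / ?S * (\<Sum>k\<le>n. ?c k ^ 2)"
    by (simp only: sum_subtractf sum_distrib_left[symmetric] indicator)
  also have "\<dots> = path_kernel_psum w l - path_kernel_psum w l / ?S * ?S"
    by (simp add: path_kernel_psum_def lessThan_Suc_atMost)
  also have "\<dots> = 0" using path_kernel_psum_pos[of "Suc n" w] by simp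
  finally show ?thesis .
qed

definition ginv_block :: "nat \<Rightarrow> nat \<Rightarrow> real" where
  "ginv_block l k = path_kernel_coeff w k * centered_step (Suc l) k / (w (2 * l) * path_kernel_coeff w l)"

lemma ginv_block_nonzero: "l < n \<Longrightarrow> k \<le> n \<Longrightarrow> ginv_block l k \<noteq> 0"
  using path_kernel_coeff_nonzero[of k] path_kernel_coeff_nonzero[of l] weights_nonzero[of "2 * l"]
    centered_step_nonzero[of "Suc l" k]
  by (simp add: ginv_block_def)

lemma w_mult_ginv_block:
  "l < n \<Longrightarrow> w (2 * l) * ginv_block l k
    = path_kernel_coeff w k * centered_step (Suc l) k / path_kernel_coeff w l"
  using weights_nonzero[of "2 * l"] by (simp add: ginv_block_def)

lemma w_Suc_mult_ginv_block:
  assumes "l < n"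
  shows "w (2 * l + 1) * ginv_block l k
    = - path_kernel_coeff w k * centered_step (Suc l) k / path_kernel_coeff w (Suc l)"
proof -
  have "w (2 * l) * path_kernel_coeff w l = - (w (2 * l + 1) * path_kernel_coeff w (Suc l))"
    using path_kernel_coeff_Suc[OF assms] by simp
  then show ?thesis
    using assms weights_nonzero[of "2 * l + 1"] path_kernel_coeff_nonzero[of "Suc l"]
    by (simp add: ginv_block_def)
qed

lemma path_adj_mult_path_ginv_odd:
  assumes "l < n" and "l' < n"
  shows "w (2 * l + 1) * ginv_block l' (Suc l) + w (2 * l) * ginv_block l' l = (if l = l' then 1 else 0)"
proof -
  let ?c = "path_kernel_coeff w"
  have d: "w (2 * l') * ?c l' \<noteq> 0"
    using assms weights_nonzero[of "2 * l'"] path_kernel_coeff_nonzero[of l'] by simp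
  have "w (2 * l + 1) * ginv_block l' (Suc l) + w (2 * l) * ginv_block l' l
      = (w (2 * l + 1) * ?c (Suc l) * centered_step (Suc l') (Suc l)
         + w (2 * l) * ?c l * centered_step (Suc l') l) / (w (2 * l') * ?c l')"
    by (simp add: ginv_block_def add_divide_distrib)
  also have "\<dots> = w (2 * l) * ?c l * (centered_step (Suc l') l - centered_step (Suc l') (Suc l))
      / (w (2 * l') * ?c l')"
    unfolding path_kernel_coeff_Suc[OF assms(1)] by (simp add: algebra_simps)
  also have "\<dots> = (if l = l' then 1 else 0)"
    unfolding centered_step_diff_Suc using d by auto
  finally show ?thesis .
qed

lemma path_adj_mult_path_ginv_even:
  assumes "k \<le> n" and "k' \<le> n"
  shows "(if k < n then w (2 * k) * ginv_block k k' else 0)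
      + (if 0 < k then w (2 * k - 1) * ginv_block (k - 1) k' else 0)
    = (if k = k' then 1 else 0) - path_kernel_coeff w k * path_kernel_coeff w k' / path_kernel_psum w (Suc n)"
proof -
  let ?c = "path_kernel_coeff w"
  have succ: "(if k < n then w (2 * k) * ginv_block k k' else 0)
      = ?c k' * centered_step (Suc k) k' / ?c k"
    using w_mult_ginv_block[of k k'] centered_step_last[OF assms(2)] assms(1) by (auto simp: le_less)
  have pred: "(if 0 < k then w (2 * k - 1) * ginv_block (k - 1) k' else 0)
      = - ?c k' * centered_step k k' / ?c k"
  proof (cases k)
    case 0
    then show ?thesis by (simp add: centered_step_0)
  next
    case (Suc k0)
    then show ?thesis using w_Suc_mult_ginv_block[of k0 k'] assms(1) by simp
  qed
  have "?c k' * centered_step (Suc k) k' / ?c k - ?c k' * centered_step k k' / ?c k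
      = ?c k' * (centered_step (Suc k) k' - centered_step k k') / ?c k"
    by (simp add: diff_divide_distrib right_diff_distrib)
  also have "\<dots> = (if k = k' then 1 else 0) - ?c k * ?c k' / path_kernel_psum w (Suc n)"
    unfolding centered_step_Suc using path_kernel_coeff_nonzero[OF assms(1)]
    by (auto simp: field_simps power2_eq_square)
  finally show ?thesis using succ pred by simp
qed

definition path_ginv :: "real mat" where
  "path_ginv = mat (2 * n + 1) (2 * n + 1) (\<lambda>(i, j).
     if odd i \<and> even j then ginv_block (i div 2) (j div 2)
     else if even i \<and> odd j then ginv_block (j div 2) (i div 2) else 0)"

lemma path_ginv_carrier: "path_ginv \<in> carrier_mat (2 * n + 1) (2 * n + 1)"
  by (simp add: path_ginv_def)

lemma transpose_path_ginv: "transpose_mat path_ginv = path_ginv"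
  by (rule eq_matI) (auto simp: path_ginv_def)

lemma path_adj_mult_path_ginv:
  "path_adj (2 * n + 1) w * path_ginv = perp_proj_mat (2 * n + 1) (path_kernel_vec w)"
proof (rule eq_matI)
  fix i j assume "i < dim_row (perp_proj_mat (2 * n + 1) (path_kernel_vec w))"
    and "j < dim_col (perp_proj_mat (2 * n + 1) (path_kernel_vec w))"
  then have i: "i < 2 * n + 1" and j: "j < 2 * n + 1" by (simp_all add: perp_proj_mat_def)
  have "(path_adj (2 * n + 1) w * path_ginv) $$ (i, j)
      = (if i + 1 < 2 * n + 1 then w i * path_ginv $$ (i + 1, j) else 0)
      + (if 0 < i then w (i - 1) * path_ginv $$ (i - 1, j) else 0)"
    by (rule index_mult_path_adj[OF path_ginv_carrier i j])
  also have "\<dots> = (if i = j then 1 else 0)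
      - path_kernel_vec w i * path_kernel_vec w j / path_kernel_psum w (Suc n)"
  proof (cases "even i"; cases "even j")
    assume "even i" "even j"
    then obtain k k' where "i = 2 * k" "j = 2 * k'" by (elim evenE)
    moreover have "2 * k - 1 = 2 * (k - 1) + 1" if "0 < k" using that by simp
    ultimately show ?thesis
      using path_adj_mult_path_ginv_even[of k k'] i j by (auto simp: path_ginv_def path_kernel_vec_def)
  next
    assume "odd i" "odd j"
    then obtain l l' where "i = 2 * l + 1" "j = 2 * l' + 1" by (elim oddE)
    then show ?thesis
      using path_adj_mult_path_ginv_odd[of l l'] i j by (auto simp: path_ginv_def path_kernel_vec_def)
  qed (use i j in \<open>auto simp: path_ginv_def path_kernel_vec_def elim!: oddE\<close>)
  also have "\<dots> = perp_proj_mat (2 * n + 1) (path_kernel_vec w) $$ (i, j)"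
    unfolding perp_proj_mat_def sum_path_kernel_vec_sq using i j by simp
  finally show "(path_adj (2 * n + 1) w * path_ginv) $$ (i, j)
      = perp_proj_mat (2 * n + 1) (path_kernel_vec w) $$ (i, j)" .
qed (simp_all add: perp_proj_mat_def path_adj_def path_ginv_def)

lemma path_kernel_vec_orth_path_ginv:
  assumes "j < 2 * n + 1"
  shows "(\<Sum>m<2 * n + 1. path_kernel_vec w m * path_ginv $$ (m, j)) = 0"
proof (cases "even j")
  case True
  then show ?thesis using assms unfolding sum_path_kernel_vec by (simp add: path_ginv_def)
next
  case False
  then obtain l where j: "j = 2 * l + 1" by (elim oddE)
  with assms have "Suc l \<le> Suc n" by simp
  have "(\<Sum>m<2 * n + 1. path_kernel_vec w m * path_ginv $$ (m, j))
      = (\<Sum>k\<le>n. path_kernel_coeff w k ^ 2 * centered_step (Suc l) k) / (w (2 * l) * path_kernel_coeff w l)"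
    unfolding sum_path_kernel_vec sum_divide_distrib using j assms
    by (intro sum.cong) (auto simp: path_ginv_def ginv_block_def power2_eq_square)
  also have "\<dots> = 0" using weighted_sum_centered_step[OF \<open>Suc l \<le> Suc n\<close>] by simp
  finally show ?thesis .
qed

lemma path_kernel_vec_orth_path_adj:
  assumes "j < 2 * n + 1"
  shows "(\<Sum>m<2 * n + 1. path_kernel_vec w m * path_adj (2 * n + 1) w $$ (m, j)) = 0"
proof -
  have "(\<Sum>m<2 * n + 1. path_kernel_vec w m * path_adj (2 * n + 1) w $$ (m, j))
      = (\<Sum>m<2 * n + 1. path_adj (2 * n + 1) w $$ (j, m) * path_kernel_vec w m)"
    using assms by (intro sum.cong) (auto simp: path_adj_def)
  also have "\<dots> = (if j + 1 < 2 * n + 1 then w j * path_kernel_vec w (j + 1) else 0)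
      + (if 0 < j then w (j - 1) * path_kernel_vec w (j - 1) else 0)"
    by (rule path_adj_row_sum[OF assms])
  also have "\<dots> = 0"
  proof (cases "even j")
    case True
    then show ?thesis by (auto simp: path_kernel_vec_def)
  next
    case False
    then obtain l where "j = 2 * l + 1" by (elim oddE)
    with assms show ?thesis using path_kernel_coeff_Suc[of l] by (simp add: path_kernel_vec_def)
  qed
  finally show ?thesis .
qed

lemma group_inverse_path_adj: "group_inverse (path_adj (2 * n + 1) w) = path_ginv"
proof -
  let ?A = "path_adj (2 * n + 1) w" and ?P = "perp_proj_mat (2 * n + 1) (path_kernel_vec w)"
  have A: "?A \<in> carrier_mat (2 * n + 1) (2 * n + 1)" by (simp add: path_adj_def)
  have P: "?P \<in> carrier_mat (2 * n + 1) (2 * n + 1)" by (simp add: perp_proj_mat_def)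
  have AX: "?A * path_ginv = ?P" by (rule path_adj_mult_path_ginv)
  have XA: "path_ginv * ?A = ?P"
    using arg_cong[OF AX, of transpose_mat] transpose_mult[OF A path_ginv_carrier]
    by (simp add: transpose_path_adj transpose_path_ginv transpose_perp_proj_mat)
  have PA: "?P * ?A = ?A"
    using A path_kernel_vec_orth_path_adj by (rule perp_proj_mat_mult)
  have PX: "?P * path_ginv = path_ginv"
    using path_ginv_carrier path_kernel_vec_orth_path_ginv by (rule perp_proj_mat_mult)
  show ?thesis
    by (rule group_inverse_eqI[OF A is_group_inverseI[OF A path_ginv_carrier P AX XA PA PX]])
qed

lemma mat_edge_path_ginv_iff:
  assumes i: "i < 2 * n + 1" and j: "j < 2 * n + 1" and "i \<noteq> j"
  shows "mat_edge path_ginv i j \<longleftrightarrow> odd (i + j)"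
proof -
  have "mat_edge path_ginv i j \<longleftrightarrow> path_ginv $$ (i, j) \<noteq> 0"
    using assms by (simp add: mat_edge_def path_ginv_def)
  also have "\<dots> \<longleftrightarrow> odd (i + j)"
  proof (cases "odd i")
    case True
    then have "odd (i + j) \<longleftrightarrow> even j" by simp
    moreover have "even j \<Longrightarrow> ginv_block (i div 2) (j div 2) \<noteq> 0"
      using True i j by (intro ginv_block_nonzero) presburger+
    ultimately show ?thesis using True i j by (auto simp: path_ginv_def)
  next
    case False
    then have "odd (i + j) \<longleftrightarrow> odd j" by simp
    moreover have "odd j \<Longrightarrow> ginv_block (j div 2) (i div 2) \<noteq> 0"
      using False i j by (intro ginv_block_nonzero) presburger+
    ultimately show ?thesis using False i j by (auto simp: path_ginv_def)
  qed
  finally show ?thesis .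
qed

end

lemma two_le_mat_degree:
  assumes "mat_edge M i a" and "mat_edge M i b" and "a \<noteq> b"
  shows "2 \<le> mat_degree M i"
proof -
  have "finite {j. mat_edge M i j}"
    by (rule finite_subset[of _ "{..<dim_row M}"]) (auto simp: mat_edge_def)
  moreover have "{a, b} \<subseteq> {j. mat_edge M i j}" using assms by auto
  ultimately have "card {a, b} \<le> mat_degree M i" unfolding mat_degree_def by (rule card_mono)
  then show ?thesis using assms(3) by simp
qed

theorem proposition2p14:
  fixes n :: nat and w :: "nat \<Rightarrow> real"
  assumes "n \<ge> 1"
    and "\<And>i. i < 2 * n \<Longrightarrow> w i \<noteq> 0"
  defines "G \<equiv> group_inverse (path_adj (2 * n + 1) w)"
  shows "(\<forall>i < 2 * n. mat_edge G i (i + 1))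
    \<and> (\<forall>i < 2 * n + 1. \<forall>j < 2 * n + 1. i \<noteq> j \<longrightarrow> (mat_edge G i j \<longleftrightarrow> odd (i + j)))
    \<and> (n \<ge> 2 \<longrightarrow> (\<forall>i < 2 * n + 1. mat_degree G i \<noteq> 1))"
proof -
  have "G = path_ginv n w" unfolding G_def using assms(2) by (rule group_inverse_path_adj)
  then have edge: "mat_edge G i j \<longleftrightarrow> odd (i + j)"
    if "i < 2 * n + 1" "j < 2 * n + 1" "i \<noteq> j" for i j
    using mat_edge_path_ginv_iff[OF assms(2) that] by simp
  have degree: "2 \<le> mat_degree G i" if "2 \<le> n" "i < 2 * n + 1" for i
  proof -
    define a where "a = (if even i then 1 else 0 :: nat)"
    have "a + 2 < 2 * n + 1" "i \<noteq> a" "i \<noteq> a + 2" "odd (i + a)"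
      using that by (auto simp: a_def intro: odd_pos)
    then have "mat_edge G i a" "mat_edge G i (a + 2)"
      using that edge by auto
    then show ?thesis by (rule two_le_mat_degree) simp
  qed
  show ?thesis
  proof (intro conjI allI impI)
    fix i assume "i < 2 * n"
    then show "mat_edge G i (i + 1)" by (simp add: edge)
  next
    fix i j assume "i < 2 * n + 1" "j < 2 * n + 1" "i \<noteq> j"
    then show "mat_edge G i j \<longleftrightarrow> odd (i + j)" by (rule edge)
  next
    fix i assume "2 \<le> n" "i < 2 * n + 1"
    with degree show "mat_degree G i \<noteq> 1" by fastforce
  qed
qed

end
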